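(* $g\big[\mathbf{RP}_{48}(\mathbb{R})\big]>640.4861$.
   Context: For an $n\times n$ real matrix $A=(a_{i,j})$, Gaussian elimination without pivoting is the recursion $a^{(1)}_{i,j}=a_{i,j}$ and $a^{(k+1)}_{i,j}=a^{(k)}_{i,j}-a^{(k)}_{i,k}a^{(k)}_{k,j}/a^{(k)}_{k,k}$ for $k+1\le i,j\le n$ (defined when all pivots are nonzero). Growth factor: $g(A)=\max_{i,j,k}|a^{(k)}_{i,j}|/\max_{i,j}|a_{i,j}|$; $g[\mathbf{X}]=\sup_{A\in\mathbf{X}}g(A)$. $\mathbf{RP}_n(\mathbb{R})$ is the set of invertible real $n\times n$ matrices for which elimination is defined and $|a^{(k)}_{i,k}|,|a^{(k)}_{k,j}|\le|a^{(k)}_{k,k}|$ for all $k$ and $i,j\ge k$. (Established via an explicit computer-found matrix converted to an exactly rook-pivoted one.) *)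

theory Defs
  imports "HOL-Analysis.Analysis" "HOL-Library.Extended_Real"
begin

text \<open>Matrices of size n are represented as functions nat => nat => real,
  with 0-based indices i, j < n (entries outside are irrelevant).
  Stage k = 0,1,...,n-1 of elimination corresponds to the paper's a^(k+1).\<close>

definition ge_step :: "(nat \<Rightarrow> nat \<Rightarrow> real) \<Rightarrow> nat \<Rightarrow> (nat \<Rightarrow> nat \<Rightarrow> real)" where
  "ge_step M k = (\<lambda>i j. if k < i \<and> k < j then M i j - M i k * M k j / M k k else M i j)"

fun ge_stage :: "(nat \<Rightarrow> nat \<Rightarrow> real) \<Rightarrow> nat \<Rightarrow> (nat \<Rightarrow> nat \<Rightarrow> real)" where
  "ge_stage A 0 = A"
| "ge_stage A (Suc k) = ge_step (ge_stage A k) k"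

definition ge_defined :: "nat \<Rightarrow> (nat \<Rightarrow> nat \<Rightarrow> real) \<Rightarrow> bool" where
  "ge_defined n A \<longleftrightarrow> (\<forall>k<n. ge_stage A k k k \<noteq> 0)"

definition growth :: "nat \<Rightarrow> (nat \<Rightarrow> nat \<Rightarrow> real) \<Rightarrow> real" where
  "growth n A = Max {\<bar>ge_stage A k i j\<bar> | k i j. k < n \<and> k \<le> i \<and> i < n \<and> k \<le> j \<and> j < n}
               / Max {\<bar>A i j\<bar> | i j. i < n \<and> j < n}"

definition invertible_mat :: "nat \<Rightarrow> (nat \<Rightarrow> nat \<Rightarrow> real) \<Rightarrow> bool" where
  "invertible_mat n A \<longleftrightarrow> (\<exists>B. \<forall>i<n. \<forall>j<n.
      (\<Sum>l<n. A i l * B l j) = (if i = j then 1 else 0) \<and>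
      (\<Sum>l<n. B i l * A l j) = (if i = j then 1 else 0))"

text \<open>Rook pivoting set RP_n(R) (matrices with entries outside the n x n block zero,
  so that each matrix is represented exactly once).\<close>
definition RP :: "nat \<Rightarrow> (nat \<Rightarrow> nat \<Rightarrow> real) set" where
  "RP n = {A. (\<forall>i j. (n \<le> i \<or> n \<le> j) \<longrightarrow> A i j = 0) \<and>
              invertible_mat n A \<and> ge_defined n A \<and>
              (\<forall>k<n. \<forall>i. k \<le> i \<and> i < n \<longrightarrow>
                  \<bar>ge_stage A k i k\<bar> \<le> \<bar>ge_stage A k k k\<bar> \<and>
                  \<bar>ge_stage A k k i\<bar> \<le> \<bar>ge_stage A k k k\<bar>)}"

definition growth_sup :: "nat \<Rightarrow> (nat \<Rightarrow> nat \<Rightarrow> real) set \<Rightarrow> ereal" where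
  "growth_sup n X = (SUP A\<in>X. ereal (growth n A))"

end

theory Submission
  imports Defs "Jordan_Normal_Form.Determinant"
begin

text \<open>If A = L U with L unit lower triangular and U upper triangular with nonzero diagonal,
  elimination without pivoting reproduces the factorisation: the active block at stage k is
  the product of the trailing parts of L and U. Hence the pivot column at stage k is
  L(:,k) U(k,k) and the pivot row is U(k,:), so A is rook-pivoted as soon as the entries of
  L are at most 1 in modulus and every row of U is dominated by its diagonal entry; and the
  last pivot is U(n,n). The witness for n = 48 is a computer-found such pair (L scaled by
  1000 to integer entries) with last pivot 705848 and all entries of A at most 1045.588, so
  its growth factor exceeds 705848 / 1045.588 > 640.4861.\<close>

locale LU_factorization =
  fixes n :: nat and L U A :: "nat \<Rightarrow> nat \<Rightarrow> real"
  assumes L_diag: "\<And>i. i < n \<Longrightarrow> L i i = 1"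
    and L_upper_zero: "\<And>i j. i < j \<Longrightarrow> j < n \<Longrightarrow> L i j = 0"
    and U_lower_zero: "\<And>i j. j < i \<Longrightarrow> i < n \<Longrightarrow> U i j = 0"
    and U_diag_nonzero: "\<And>i. i < n \<Longrightarrow> U i i \<noteq> 0"
    and A_eq_LU: "\<And>i j. i < n \<Longrightarrow> j < n \<Longrightarrow> A i j = (\<Sum>l<n. L i l * U l j)"
begin

lemma ge_stage_eq_trailing_product:
  "k \<le> n \<Longrightarrow> k \<le> i \<Longrightarrow> i < n \<Longrightarrow> k \<le> j \<Longrightarrow> j < n \<Longrightarrow>
     ge_stage A k i j = (\<Sum>l\<in>{k..<n}. L i l * U l j)"
proof (induction k arbitrary: i j)
  case 0
  then show ?case using A_eq_LU by (simp add: atLeast0LessThan)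
next
  case (Suc k)
  have k: "k < n" using Suc by simp
  have IH: "\<And>i j. k \<le> i \<Longrightarrow> i < n \<Longrightarrow> k \<le> j \<Longrightarrow> j < n \<Longrightarrow>
      ge_stage A k i j = L i k * U k j + (\<Sum>l\<in>{Suc k..<n}. L i l * U l j)"
    using Suc.IH k by (simp add: sum.atLeast_Suc_lessThan)
  have col: "ge_stage A k i k = L i k * U k k"
    using IH[of i k] Suc.prems by (simp add: U_lower_zero)
  have row: "ge_stage A k k j = U k j"
    using IH[of k j] Suc.prems k by (simp add: L_diag L_upper_zero)
  have piv: "ge_stage A k k k = U k k"
    using IH[of k k] k by (simp add: L_diag L_upper_zero)
  have "ge_stage A (Suc k) i j
      = ge_stage A k i j - ge_stage A k i k * ge_stage A k k j / ge_stage A k k k"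
    using Suc.prems by (simp add: ge_step_def)
  also have "\<dots> = (\<Sum>l\<in>{Suc k..<n}. L i l * U l j)"
    using IH[of i j] col row piv U_diag_nonzero[OF k] Suc.prems by simp
  finally show ?case .
qed

lemma ge_stage_pivot_column:
  assumes "k \<le> i" "i < n"
  shows "ge_stage A k i k = L i k * U k k"
proof -
  have "(\<Sum>l\<in>{Suc k..<n}. L i l * U l k) = 0"
    by (rule sum.neutral) (auto simp: U_lower_zero)
  then show ?thesis
    using ge_stage_eq_trailing_product[of k i k] assms by (simp add: sum.atLeast_Suc_lessThan)
qed

lemma ge_stage_pivot_row:
  assumes "k \<le> j" "j < n"
  shows "ge_stage A k k j = U k j"
proof -
  have "(\<Sum>l\<in>{Suc k..<n}. L k l * U l j) = 0"
    by (rule sum.neutral) (auto simp: L_upper_zero)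
  then show ?thesis
    using ge_stage_eq_trailing_product[of k k j] assms
    by (simp add: sum.atLeast_Suc_lessThan L_diag)
qed

lemma ge_stage_pivot: "k < n \<Longrightarrow> ge_stage A k k k = U k k"
  using ge_stage_pivot_row[of k k] by simp

lemma ge_defined: "ge_defined n A"
  unfolding ge_defined_def using ge_stage_pivot U_diag_nonzero by simp

lemma invertible: "Defs.invertible_mat n A"
proof -
  define Lm where "Lm = mat n n (\<lambda>(i, j). L i j)"
  define Um where "Um = mat n n (\<lambda>(i, j). U i j)"
  have Lm: "Lm \<in> carrier_mat n n" and Um: "Um \<in> carrier_mat n n"
    by (auto simp: Lm_def Um_def)
  have "det Lm = prod_list (diag_mat Lm)"
    by (rule det_lower_triangular[OF _ Lm]) (auto simp: Lm_def L_upper_zero)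
  also have "\<dots> = prod_list (map (\<lambda>i. 1) [0..<n])"
    unfolding diag_mat_def by (intro arg_cong[where f = prod_list] map_cong) (auto simp: Lm_def L_diag)
  also have "\<dots> = 1" by (simp add: map_replicate_const)
  finally have det_L: "det Lm = 1" .
  have "det Um = prod_list (diag_mat Um)"
    by (rule det_upper_triangular[OF _ Um]) (auto simp: Um_def U_lower_zero upper_triangular_def)
  also have "\<dots> \<noteq> 0"
    by (auto simp: diag_mat_def Um_def U_diag_nonzero prod_list_zero_iff)
  finally have det_U: "det Um \<noteq> 0" .
  have LU: "Lm * Um \<in> carrier_mat n n" using Lm Um by auto
  have "det (Lm * Um) \<noteq> 0" using det_mult[OF Lm Um] det_L det_U by simp
  from det_non_zero_imp_unit[OF LU this, unfolded Units_def, of "()"]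
  obtain B where B: "B \<in> carrier_mat n n"
    and left: "B * (Lm * Um) = 1\<^sub>m n" and right: "(Lm * Um) * B = 1\<^sub>m n"
    by (auto simp: ring_mat_def)
  have dims: "dim_row (Lm * Um) = n" "dim_col (Lm * Um) = n" "dim_row B = n" "dim_col B = n"
    using LU B by auto
  have LU_entry: "(Lm * Um) $$ (i, j) = A i j" if "i < n" "j < n" for i j
    using Lm Um that
    by (auto simp: Lm_def Um_def A_eq_LU scalar_prod_def atLeast0LessThan intro!: sum.cong)
  show ?thesis
    unfolding Defs.invertible_mat_def
  proof (intro exI[of _ "\<lambda>i j. B $$ (i, j)"] allI impI conjI)
    fix i j assume ij: "i < n" "j < n"
    have "((Lm * Um) * B) $$ (i, j) = (\<Sum>l<n. (Lm * Um) $$ (i, l) * B $$ (l, j))"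
      using dims ij by (simp add: scalar_prod_def atLeast0LessThan)
    then show "(\<Sum>l<n. A i l * B $$ (l, j)) = (if i = j then 1 else 0)"
      using right ij LU_entry by simp
    have "(B * (Lm * Um)) $$ (i, j) = (\<Sum>l<n. B $$ (i, l) * (Lm * Um) $$ (l, j))"
      using dims ij by (simp add: scalar_prod_def atLeast0LessThan)
    then show "(\<Sum>l<n. B $$ (i, l) * A l j) = (if i = j then 1 else 0)"
      using left ij LU_entry by simp
  qed
qed

lemma in_RP:
  assumes L_bound: "\<And>i j. i < n \<Longrightarrow> j < n \<Longrightarrow> \<bar>L i j\<bar> \<le> 1"
    and U_row_dominant: "\<And>i j. i < n \<Longrightarrow> j < n \<Longrightarrow> \<bar>U i j\<bar> \<le> \<bar>U i i\<bar>"
    and A_outside: "\<And>i j. n \<le> i \<or> n \<le> j \<Longrightarrow> A i j = 0"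
  shows "A \<in> RP n"
  unfolding RP_def
proof (intro CollectI conjI allI impI invertible ge_defined A_outside)
  fix k i assume ki: "k < n" "k \<le> i \<and> i < n"
  have "\<bar>L i k\<bar> * \<bar>U k k\<bar> \<le> \<bar>U k k\<bar>"
    using L_bound[of i k] ki by (intro mult_left_le_one_le) auto
  then show "\<bar>ge_stage A k i k\<bar> \<le> \<bar>ge_stage A k k k\<bar>"
    using ki by (simp add: ge_stage_pivot_column ge_stage_pivot L_diag abs_mult)
  show "\<bar>ge_stage A k k i\<bar> \<le> \<bar>ge_stage A k k k\<bar>"
    using ki U_row_dominant by (simp add: ge_stage_pivot_row ge_stage_pivot)
qed

end

lemma growth_ge_stage_entry_over_bound:
  assumes "ge_defined n A"
    and active: "k < n" "k \<le> i" "i < n" "k \<le> j" "j < n"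
    and bound: "\<And>i j. i < n \<Longrightarrow> j < n \<Longrightarrow> \<bar>A i j\<bar> \<le> b"
  shows "\<bar>ge_stage A k i j\<bar> / b \<le> growth n A"
proof -
  define S where "S = {\<bar>ge_stage A k i j\<bar> | k i j. k < n \<and> k \<le> i \<and> i < n \<and> k \<le> j \<and> j < n}"
  define T where "T = {\<bar>A i j\<bar> | i j. i < n \<and> j < n}"
  have S_image: "S = (\<lambda>(k, i, j). \<bar>ge_stage A k i j\<bar>) `
      {(k, i, j). k < n \<and> k \<le> i \<and> i < n \<and> k \<le> j \<and> j < n}"
    unfolding S_def by force
  have "finite {(k, i, j). k < n \<and> k \<le> i \<and> i < n \<and> k \<le> j \<and> j < n}"
    by (rule finite_subset[of _ "{..<n} \<times> {..<n} \<times> {..<n}"]) auto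
  then have "finite S" unfolding S_image by (rule finite_imageI)
  moreover have "\<bar>ge_stage A k i j\<bar> \<in> S" using active unfolding S_def by blast
  ultimately have S_max: "\<bar>ge_stage A k i j\<bar> \<le> Max S" by (rule Max_ge)
  have T_finite: "finite T"
    by (rule finite_subset[of _ "(\<lambda>(i, j). \<bar>A i j\<bar>) ` ({..<n} \<times> {..<n})"])
      (auto simp: T_def)
  have "0 < n" using active by simp
  then have A00: "\<bar>A 0 0\<bar> \<in> T" unfolding T_def by blast
  have "A 0 0 \<noteq> 0"
    using assms(1) \<open>0 < n\<close> unfolding ge_defined_def by (metis ge_stage.simps(1))
  then have T_pos: "0 < Max T" using Max_ge[OF T_finite A00] by linarith
  have T_le: "Max T \<le> b"
    using T_finite A00 bound by (subst Max_le_iff) (auto simp: T_def)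
  have "\<bar>ge_stage A k i j\<bar> / b \<le> \<bar>ge_stage A k i j\<bar> / Max T"
    using T_pos T_le by (intro divide_left_mono) auto
  also have "\<dots> \<le> Max S / Max T"
    using S_max T_pos by (intro divide_right_mono) auto
  also have "\<dots> = growth n A" by (simp add: growth_def S_def T_def)
  finally show ?thesis .
qed

fun rows_satisfy :: "(nat \<Rightarrow> nat \<Rightarrow> 'a \<Rightarrow> bool) \<Rightarrow> nat \<Rightarrow> nat \<Rightarrow> 'a list \<Rightarrow> bool" where
  "rows_satisfy P k 0 [r] \<longleftrightarrow> P k 0 r"
| "rows_satisfy P k (Suc a) (r # rs) \<longleftrightarrow> P k (Suc a) r \<and> rows_satisfy P (Suc k) a rs"
| "rows_satisfy P k a rs \<longleftrightarrow> False"

lemma rows_satisfy_nth: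
  "rows_satisfy P k a rs \<Longrightarrow> length rs = Suc a \<and> (\<forall>m < length rs. P (k + m) (a - m) (rs ! m))"
proof (induction P k a rs rule: rows_satisfy.induct)
  case (2 P k a r rs)
  then show ?case by (auto simp: nth_Cons split: nat.splits)
qed auto

text \<open>lower_row k a r and upper_row k a r: r is row k of 1000 L, respectively of U,
  for a matrix of size k + 1 + a.\<close>
fun lower_row :: "nat \<Rightarrow> nat \<Rightarrow> int list \<Rightarrow> bool" where
  "lower_row (Suc k) a (x # xs) \<longleftrightarrow> \<bar>x\<bar> \<le> 1000 \<and> lower_row k a xs"
| "lower_row 0 a (x # xs) \<longleftrightarrow> x = 1000 \<and> xs = replicate a 0"
| "lower_row k a [] \<longleftrightarrow> False"

fun upper_row :: "nat \<Rightarrow> nat \<Rightarrow> int list \<Rightarrow> bool" where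
  "upper_row (Suc k) a (x # xs) \<longleftrightarrow> x = 0 \<and> upper_row k a xs"
| "upper_row 0 a (x # xs) \<longleftrightarrow> x \<noteq> 0 \<and> length xs = a \<and> list_all (\<lambda>y. \<bar>y\<bar> \<le> \<bar>x\<bar>) xs"
| "upper_row k a [] \<longleftrightarrow> False"

fun lincomb :: "int list \<Rightarrow> int list list \<Rightarrow> int list" where
  "lincomb [c] [u] = map ((*) c) u"
| "lincomb (c # cs) (u # us) = map2 (+) (map ((*) c) u) (lincomb cs us)"
| "lincomb cs us = []"

lemmas int_list_evaluation = numeral_eq_Suc pred_numeral_simps arith_simps arith_special
  more_arith_simps mult_minus1 mult_minus1_right rel_simps simp_thms list.pred_inject
  zip_Cons_Cons zip_Nil list.map prod.case replicate_Suc replicate_0 list.inject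
  length_Cons list.size(3) nat.inject nat.distinct

lemma lower_row_nth:
  "lower_row k a xs \<Longrightarrow> length xs = k + 1 + a \<and> (\<forall>j < k. \<bar>xs ! j\<bar> \<le> 1000) \<and> xs ! k = 1000
     \<and> (\<forall>j. k < j \<longrightarrow> j < length xs \<longrightarrow> xs ! j = 0)"
  by (induction k a xs rule: lower_row.induct) (auto simp: nth_Cons split: nat.splits)

lemma upper_row_nth:
  "upper_row k a xs \<Longrightarrow> length xs = k + 1 + a \<and> (\<forall>j < k. xs ! j = 0) \<and> xs ! k \<noteq> 0
     \<and> (\<forall>j < length xs. \<bar>xs ! j\<bar> \<le> \<bar>xs ! k\<bar>)"
  by (induction k a xs rule: upper_row.induct) (auto simp: nth_Cons list_all_length split: nat.splits)

lemma lincomb_nth: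
  assumes "length cs = length us" "cs \<noteq> []" "\<forall>u \<in> set us. length u = m"
  shows "length (lincomb cs us) = m \<and> (\<forall>j < m. lincomb cs us ! j = (\<Sum>l < length cs. cs ! l * us ! l ! j))"
  using assms
proof (induction cs arbitrary: us)
  case (Cons c cs)
  then obtain u us' where us: "us = u # us'" and u: "length u = m" by (cases us) auto
  show ?case
  proof (cases "cs = []")
    case True
    then show ?thesis using Cons.prems us u by simp
  next
    case False
    then obtain c' cs' where cs: "cs = c' # cs'" by (cases cs) auto
    have IH: "length (lincomb cs us') = m"
      "\<And>j. j < m \<Longrightarrow> lincomb cs us' ! j = (\<Sum>l < length cs. cs ! l * us' ! l ! j)"
      using Cons.IH[of us'] Cons.prems us False by auto
    have "lincomb (c # cs) us ! j = (\<Sum>l < length (c # cs). (c # cs) ! l * us ! l ! j)"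
      if "j < m" for j
      using IH that u unfolding us cs by (simp add: sum.lessThan_Suc_shift del: sum.lessThan_Suc)
    then show ?thesis using IH u unfolding us cs by simp
  qed
qed simp

definition L_int :: "int list list" where
  "L_int = [[1000,0,0,0,0,0,0,0,0,0,0,0,0,0,0,0,0,0,0,0,0,0,0,0,0,0,0,0,0,0,0,0,0,0,0,0,0,0,0,0,0,0,0,0,0,0,0,0],
  [0,1000,0,0,0,0,0,0,0,0,0,0,0,0,0,0,0,0,0,0,0,0,0,0,0,0,0,0,0,0,0,0,0,0,0,0,0,0,0,0,0,0,0,0,0,0,0,0],
  [-5,2,1000,0,0,0,0,0,0,0,0,0,0,0,0,0,0,0,0,0,0,0,0,0,0,0,0,0,0,0,0,0,0,0,0,0,0,0,0,0,0,0,0,0,0,0,0,0],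
  [-4,1,7,1000,0,0,0,0,0,0,0,0,0,0,0,0,0,0,0,0,0,0,0,0,0,0,0,0,0,0,0,0,0,0,0,0,0,0,0,0,0,0,0,0,0,0,0,0],
  [-3,-4,3,2,1000,0,0,0,0,0,0,0,0,0,0,0,0,0,0,0,0,0,0,0,0,0,0,0,0,0,0,0,0,0,0,0,0,0,0,0,0,0,0,0,0,0,0,0],
  [-1,5,11,5,-3,1000,0,0,0,0,0,0,0,0,0,0,0,0,0,0,0,0,0,0,0,0,0,0,0,0,0,0,0,0,0,0,0,0,0,0,0,0,0,0,0,0,0,0],
  [-2,-4,-4,-2,4,-9,1000,0,0,0,0,0,0,0,0,0,0,0,0,0,0,0,0,0,0,0,0,0,0,0,0,0,0,0,0,0,0,0,0,0,0,0,0,0,0,0,0,0],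
  [0,-7,9,3,-4,-4,3,1000,0,0,0,0,0,0,0,0,0,0,0,0,0,0,0,0,0,0,0,0,0,0,0,0,0,0,0,0,0,0,0,0,0,0,0,0,0,0,0,0],
  [-519,-374,483,355,68,-6,50,338,1000,0,0,0,0,0,0,0,0,0,0,0,0,0,0,0,0,0,0,0,0,0,0,0,0,0,0,0,0,0,0,0,0,0,0,0,0,0,0,0],
  [-521,-249,419,284,16,-5,646,183,456,1000,0,0,0,0,0,0,0,0,0,0,0,0,0,0,0,0,0,0,0,0,0,0,0,0,0,0,0,0,0,0,0,0,0,0,0,0,0,0],
  [-77,17,134,49,-40,72,76,32,56,27,1000,0,0,0,0,0,0,0,0,0,0,0,0,0,0,0,0,0,0,0,0,0,0,0,0,0,0,0,0,0,0,0,0,0,0,0,0,0],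
  [20,842,474,-68,-784,1000,780,-780,-859,774,-338,1000,0,0,0,0,0,0,0,0,0,0,0,0,0,0,0,0,0,0,0,0,0,0,0,0,0,0,0,0,0,0,0,0,0,0,0,0],
  [-227,-182,-891,301,668,-998,-458,750,341,-292,228,-721,1000,0,0,0,0,0,0,0,0,0,0,0,0,0,0,0,0,0,0,0,0,0,0,0,0,0,0,0,0,0,0,0,0,0,0,0],
  [-997,-393,755,566,-222,-533,385,965,825,895,-117,21,412,1000,0,0,0,0,0,0,0,0,0,0,0,0,0,0,0,0,0,0,0,0,0,0,0,0,0,0,0,0,0,0,0,0,0,0],
  [-5,78,-286,-534,59,303,220,-297,-168,-10,85,149,-269,-515,1000,0,0,0,0,0,0,0,0,0,0,0,0,0,0,0,0,0,0,0,0,0,0,0,0,0,0,0,0,0,0,0,0,0],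
  [599,-35,-802,-148,210,102,-727,42,-369,-756,47,-158,104,-409,-104,1000,0,0,0,0,0,0,0,0,0,0,0,0,0,0,0,0,0,0,0,0,0,0,0,0,0,0,0,0,0,0,0,0],
  [-141,-285,-573,9,738,-171,2,-8,217,-489,172,-43,-371,-483,524,520,1000,0,0,0,0,0,0,0,0,0,0,0,0,0,0,0,0,0,0,0,0,0,0,0,0,0,0,0,0,0,0,0],
  [999,158,-860,-212,613,377,-309,-886,-800,-828,-120,-1,-230,-706,125,148,55,1000,0,0,0,0,0,0,0,0,0,0,0,0,0,0,0,0,0,0,0,0,0,0,0,0,0,0,0,0,0,0],
  [345,-80,-96,-211,75,-689,30,386,-214,-4,-418,-271,125,382,-491,79,-53,399,1000,0,0,0,0,0,0,0,0,0,0,0,0,0,0,0,0,0,0,0,0,0,0,0,0,0,0,0,0,0],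
  [357,-213,-751,-235,506,-288,-424,221,-282,-993,587,-431,124,-529,443,36,209,367,146,1000,0,0,0,0,0,0,0,0,0,0,0,0,0,0,0,0,0,0,0,0,0,0,0,0,0,0,0,0],
  [-675,-269,803,373,-70,175,418,43,612,323,367,140,-141,123,-81,-254,-80,268,174,421,1000,0,0,0,0,0,0,0,0,0,0,0,0,0,0,0,0,0,0,0,0,0,0,0,0,0,0,0],
  [898,-964,195,618,923,1,526,-391,-341,-668,712,-193,-401,-139,-29,610,417,526,69,160,-484,1000,0,0,0,0,0,0,0,0,0,0,0,0,0,0,0,0,0,0,0,0,0,0,0,0,0,0],
  [-959,-881,859,656,-656,-952,-982,-153,119,-368,490,-476,647,355,-716,-388,-400,-114,278,199,-70,-224,1000,0,0,0,0,0,0,0,0,0,0,0,0,0,0,0,0,0,0,0,0,0,0,0,0,0],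
  [157,-225,-988,-207,504,-999,6,990,-141,-958,-715,-459,576,127,710,-425,-113,357,442,446,-474,-638,79,1000,0,0,0,0,0,0,0,0,0,0,0,0,0,0,0,0,0,0,0,0,0,0,0,0],
  [-760,-511,-500,954,829,-988,116,893,520,-243,771,-732,217,-35,90,986,618,-101,140,-91,-589,567,72,-507,1000,0,0,0,0,0,0,0,0,0,0,0,0,0,0,0,0,0,0,0,0,0,0,0],
  [-394,981,-572,-845,544,967,732,-122,156,998,-619,250,-519,-124,533,513,676,-749,-29,-319,103,-76,-631,-300,68,1000,0,0,0,0,0,0,0,0,0,0,0,0,0,0,0,0,0,0,0,0,0,0],
  [-993,411,303,-494,-993,995,-595,780,999,179,-166,46,540,-712,881,-721,-591,204,-166,619,485,-962,-66,967,-433,-166,1000,0,0,0,0,0,0,0,0,0,0,0,0,0,0,0,0,0,0,0,0,0],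
  [230,-697,-741,1000,811,591,-888,878,1000,-643,828,-773,936,-787,225,954,367,287,-803,795,935,56,-675,-580,839,-198,449,1000,0,0,0,0,0,0,0,0,0,0,0,0,0,0,0,0,0,0,0,0],
  [-411,616,-638,-779,-240,-30,-954,-996,-883,673,-851,-281,222,167,-635,985,-409,-141,440,-993,-775,131,648,-667,868,396,225,6,1000,0,0,0,0,0,0,0,0,0,0,0,0,0,0,0,0,0,0,0],
  [740,773,626,299,941,-446,998,-963,-918,545,-51,181,-959,306,729,-533,-155,996,994,-777,-1000,776,300,50,34,-1000,-510,-613,-208,1000,0,0,0,0,0,0,0,0,0,0,0,0,0,0,0,0,0,0],
  [799,999,-998,510,-999,-986,940,1000,-851,-985,198,997,561,463,-879,-782,1000,396,-983,515,1000,-430,-908,580,-482,-999,-958,72,-813,1000,1000,0,0,0,0,0,0,0,0,0,0,0,0,0,0,0,0,0],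
  [-994,-988,487,-38,-996,-988,-116,878,1000,-620,999,-580,55,-857,999,-181,-126,911,941,-562,-997,55,944,632,-707,-964,767,-970,980,569,-14,1000,0,0,0,0,0,0,0,0,0,0,0,0,0,0,0,0],
  [994,989,-973,920,-563,-347,912,999,-706,-696,-729,404,-806,997,-998,-90,670,-904,-795,-776,-225,498,-605,-38,655,-997,-904,67,-945,460,188,-267,1000,0,0,0,0,0,0,0,0,0,0,0,0,0,0,0],
  [976,-916,-995,1000,-986,-889,-885,-1000,403,963,-11,177,999,1000,-668,876,679,-934,-861,-999,1000,742,-407,-342,-716,-1000,-289,474,999,-999,36,646,-775,1000,0,0,0,0,0,0,0,0,0,0,0,0,0,0],
  [-284,-989,605,-992,-999,-110,985,-959,-996,301,975,796,143,-605,364,-995,-928,-986,-363,984,277,-788,919,1000,994,-946,-996,-358,999,-589,303,-294,-185,119,1000,0,0,0,0,0,0,0,0,0,0,0,0,0],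
  [-392,104,259,761,-3,954,992,-998,-945,662,430,-595,546,826,-718,-997,-983,-991,994,-999,-997,565,341,349,936,-999,-978,-362,770,-553,-220,283,-83,336,368,1000,0,0,0,0,0,0,0,0,0,0,0,0],
  [271,296,882,995,430,-554,176,861,877,748,-951,234,-891,256,912,566,995,-388,-500,-549,-999,211,-971,-106,-407,560,529,135,-296,778,-101,86,347,-186,-352,-355,1000,0,0,0,0,0,0,0,0,0,0,0],
  [999,931,834,999,-54,994,-997,-962,1000,599,644,1000,1000,-994,924,1000,-990,-998,1000,1000,-995,988,656,943,334,-717,-254,-999,238,-990,-660,-230,-592,-17,701,997,-672,1000,0,0,0,0,0,0,0,0,0,0],
  [997,999,996,984,-992,-377,-987,998,767,-721,-1000,238,-846,-475,-924,-527,682,999,975,754,-994,999,998,-1000,292,-128,974,916,885,975,871,1000,-428,-540,-667,543,-394,296,1000,0,0,0,0,0,0,0,0,0],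
  [-996,999,-999,998,-988,976,-1000,-977,-982,1000,997,999,-994,1000,834,990,-1000,1000,998,-174,-999,996,-785,1000,996,994,859,-927,921,-1000,-402,873,988,435,-956,-994,927,-283,573,1000,0,0,0,0,0,0,0,0],
  [999,1000,-993,995,993,983,-1000,1000,997,826,1000,1000,960,-997,-988,-1000,-689,1000,-754,-1000,815,749,977,238,1000,1000,-1000,-839,801,-484,-971,894,-821,-738,997,-1000,-382,773,-538,-209,1000,0,0,0,0,0,0,0],
  [1000,-996,907,976,976,-76,-994,999,1000,999,1000,994,-997,-137,772,-998,-1000,-999,998,-907,-858,-960,-981,912,307,990,-713,932,330,999,996,-973,-915,990,-711,69,-982,31,999,254,-188,1000,0,0,0,0,0,0],
  [1000,-1000,-995,659,-885,1000,-127,1000,991,-943,907,1000,1000,937,999,-1000,997,953,-909,-777,123,778,997,460,997,994,925,624,999,974,-999,-991,493,214,-983,958,-833,-711,-990,-822,503,655,1000,0,0,0,0,0],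
  [-999,-1000,-800,911,-1000,1000,-999,-1000,-1000,1000,-981,-1000,-996,568,999,-857,998,912,-1000,996,40,-935,-998,997,797,-988,-999,584,-548,963,-991,803,958,-175,-995,-228,-999,999,555,821,995,327,-530,1000,0,0,0,0],
  [949,-638,999,967,-998,745,930,534,-984,-907,993,-458,-827,996,1000,997,854,943,-998,-710,995,-999,-921,991,927,-145,958,394,-1000,-905,-989,-430,-999,-942,919,994,-993,-997,830,450,-704,-949,-854,-87,1000,0,0,0],
  [-956,998,990,-1000,1000,-1000,-972,-542,998,999,1000,987,-966,-917,-941,648,-810,998,-992,1000,-1000,-987,-949,772,-343,-946,998,977,-982,-978,989,991,1000,997,386,1000,-529,990,-649,-990,967,534,-62,-978,-514,1000,0,0],
  [-536,-997,-998,-1000,-999,732,-1000,1000,987,998,880,1000,-994,-999,-1000,-992,1000,997,744,977,-993,999,986,999,999,999,-999,1000,-755,1000,-1000,-747,-976,1000,-913,960,328,-913,-146,-971,-907,-995,-994,638,954,-944,1000,0],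
  [1000,-998,1000,-1000,-1000,-1000,-1000,-964,1000,1000,999,1000,1000,-1000,-996,1000,1000,1000,-985,997,-953,-1000,-1000,1000,998,989,-999,-1000,999,986,-999,-1000,998,1000,-999,996,-998,-1000,1000,-1000,1000,-1000,-1000,-999,-1000,-1000,-1000,1000]]"

definition U_int :: "int list list" where
  "U_int = [[996,0,-2,-43,3,0,7,-21,-49,206,46,-982,-233,294,613,-297,-494,217,-413,438,348,313,914,-773,-904,817,-184,-934,-717,575,852,652,986,996,-987,-993,993,520,-984,996,-991,-995,-996,993,-950,996,983,-993],
  [0,996,1,-29,-4,-3,-1,0,103,-29,-26,-684,-245,345,375,-499,643,-771,410,-7,699,90,993,64,328,985,-709,992,996,795,-994,-994,919,644,-929,-742,-977,971,-749,995,988,994,-958,996,-990,-183,-961,996],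
  [0,0,998,22,-2,-7,-2,-2,-308,-296,-77,330,529,380,-121,69,857,-168,438,-462,469,988,-986,487,966,-694,-206,800,978,-830,319,878,990,998,-642,-954,-278,994,-998,990,-995,974,970,998,994,-990,998,-998],
  [0,0,0,999,0,-15,2,13,35,39,117,725,-193,-970,-527,223,-264,112,-108,110,-501,-999,415,233,-850,981,556,369,-724,812,-683,-999,769,992,986,999,-581,-995,-990,-999,-678,-998,-999,991,205,998,994,997],
  [0,0,0,0,998,5,-7,1,-311,-21,44,752,277,218,-376,179,789,-203,511,-264,260,11,477,418,202,-869,841,-997,887,344,-994,5,-992,863,-998,-662,793,-984,461,998,-987,-995,-892,998,978,-994,-998,998],
  [0,0,0,0,0,1000,4,-8,-13,-272,-116,-84,61,-102,-372,316,218,282,3,-233,-401,-629,-132,-100,-999,-816,-942,-654,985,-469,1000,-399,474,978,979,-599,932,-519,730,-1000,-626,-999,-868,-998,984,999,-776,999],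
  [0,0,0,0,0,0,1000,-3,842,206,-5,-125,-414,-739,-251,292,-499,887,-689,285,-739,-997,367,-278,-622,935,567,968,-403,959,-980,913,-8,999,-987,-1000,-531,1000,989,-656,961,-992,-660,-751,977,-979,996,1000],
  [0,0,0,0,0,0,0,1000,-678,600,-111,-412,691,103,118,204,-39,8,125,129,-8,821,-298,-822,-840,-984,-650,-999,984,-987,-999,-999,988,992,-980,993,365,986,999,998,999,-999,-567,-996,-1000,1000,-995,676],
  [0,0,0,0,0,0,0,0,1353,-673,6,-380,-1099,52,71,-264,-568,706,-868,353,-381,-1033,942,484,342,657,-1038,254,12,-25,1211,369,-702,-1271,546,-1328,1252,-741,-1212,1353,1250,-805,-1352,1352,-192,1352,-1328,-1352],
  [0,0,0,0,0,0,0,0,0,1270,-94,-1216,250,21,644,43,114,63,-73,423,367,515,1120,-1207,-1156,291,860,-1268,-1119,1176,1031,-1237,1267,-1269,-1161,1268,1247,-1073,-1270,499,-1268,1269,1270,-897,-594,-3,-1269,-1269],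
  [0,0,0,0,0,0,0,0,0,0,1021,-825,-399,668,247,-461,769,-934,478,110,703,405,817,-968,-836,998,-882,-385,145,998,-1020,-222,715,-1015,-1020,-879,808,890,989,-980,-1021,-1019,991,1021,-850,1014,-1003,-1021],
  [0,0,0,0,0,0,0,0,0,0,0,2269,687,-330,-599,741,-48,317,302,-449,-261,-624,-705,-224,124,-2128,202,-768,-612,-2251,-2269,1026,-2060,-736,395,-614,673,-2131,1968,2268,1596,-2156,-2267,2267,-2269,2269,-2262,-2269],
  [0,0,0,0,0,0,0,0,0,0,0,0,1410,155,138,121,613,-185,551,-112,-168,110,-1072,-205,192,-758,548,1248,-964,-970,1297,1400,202,-181,-338,-1296,-309,-1381,1406,1409,-1410,1405,-1408,1408,1403,1410,1408,-1404],
  [0,0,0,0,0,0,0,0,0,0,0,0,0,1813,399,-200,543,49,134,693,182,-82,1760,-641,-872,-190,-1770,-768,1648,85,343,529,-1613,861,1795,-857,585,176,1809,-1813,-1813,-1599,-1664,1180,-1807,-1790,1805,1812],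
  [0,0,0,0,0,0,0,0,0,0,0,0,0,0,1207,-218,114,-297,-38,-258,220,935,39,-1115,669,-70,-1184,1206,43,-1195,1206,92,1196,679,51,1206,851,-1200,776,-1207,-1073,-1206,-1206,947,400,-1196,1206,1195],
  [0,0,0,0,0,0,0,0,0,0,0,0,0,0,0,1334,-572,570,-92,230,-465,-567,801,86,-1142,-634,-1199,1326,1318,1334,-901,1326,1237,710,-1101,213,1227,-1050,-1334,-1269,748,1334,950,1334,1120,-1327,1333,-1323],
  [0,0,0,0,0,0,0,0,0,0,0,0,0,0,0,0,1830,-1220,1326,-641,915,-72,650,467,310,-778,1253,-1639,395,-1588,1828,-1320,1359,-806,231,-1829,-410,1767,1108,1809,-672,1829,-879,-1830,-1788,926,1828,-1825],
  [0,0,0,0,0,0,0,0,0,0,0,0,0,0,0,0,0,1595,-294,181,-215,-445,-12,-169,-287,-354,-1206,1395,388,-1579,1591,-1595,1254,-1260,1541,1594,1324,1586,1403,1595,-850,1581,1578,968,-1595,-1224,-1513,-1595],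
  [0,0,0,0,0,0,0,0,0,0,0,0,0,0,0,0,0,0,1255,116,863,-1119,131,231,248,-936,755,-793,-762,-1206,-1239,1032,1253,-1254,1220,-1251,-703,-1227,-1160,-1230,1255,-1244,-1254,1254,1254,1236,-1252,1231],
  [0,0,0,0,0,0,0,0,0,0,0,0,0,0,0,0,0,0,0,1470,-325,223,1176,-945,-1372,887,-183,-1304,489,981,-1114,-345,-1459,1434,1470,-20,-1300,-1425,-1457,945,1470,1459,-1398,-1348,645,-1450,-1109,-1470],
  [0,0,0,0,0,0,0,0,0,0,0,0,0,0,0,0,0,0,0,0,1490,305,57,1108,1486,-628,1087,-446,131,1485,-450,1443,1486,1486,-972,1489,929,1463,1485,-1391,-1489,1460,-1108,-1442,-20,1428,1488,1484],
  [0,0,0,0,0,0,0,0,0,0,0,0,0,0,0,0,0,0,0,0,0,2502,-2425,1206,1862,-289,1006,1409,376,243,1658,449,110,-2502,452,2303,-2497,-1821,1301,-39,2501,1678,-2502,-2352,-2495,2177,-2502,2500],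
  [0,0,0,0,0,0,0,0,0,0,0,0,0,0,0,0,0,0,0,0,0,0,3244,-397,-1981,429,-737,-13,322,1616,1321,-130,3093,3183,-2785,-880,2155,-830,3243,2751,3239,-3189,-3244,-3231,-3163,-540,-3241,3237],
  [0,0,0,0,0,0,0,0,0,0,0,0,0,0,0,0,0,0,0,0,0,0,0,3070,699,-194,1965,1280,1642,2752,1613,1812,1600,-1786,-2054,-743,-263,-929,-2568,-3039,-2125,2400,3069,-2641,-3031,3006,-2798,-3070],
  [0,0,0,0,0,0,0,0,0,0,0,0,0,0,0,0,0,0,0,0,0,0,0,0,2641,-825,1533,-798,-1699,-461,2641,1781,-2040,2622,-662,-2414,433,2556,-2251,-1320,-2630,2085,1041,-435,-2610,2636,-2621,-2637],
  [0,0,0,0,0,0,0,0,0,0,0,0,0,0,0,0,0,0,0,0,0,0,0,0,0,2362,139,1484,10,875,2208,2171,1668,1417,2249,2237,-1671,-472,2353,2362,571,-2362,2355,1843,-2269,2362,-2362,-2352],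
  [0,0,0,0,0,0,0,0,0,0,0,0,0,0,0,0,0,0,0,0,0,0,0,0,0,0,3811,-3099,-2671,2207,-506,328,-3355,2461,693,-2237,-3557,2829,3793,-287,2121,-3808,-3794,3811,-3693,-3810,3336,3796],
  [0,0,0,0,0,0,0,0,0,0,0,0,0,0,0,0,0,0,0,0,0,0,0,0,0,0,0,4432,1205,29,-3187,1145,3116,-4204,-264,-1250,-1240,-4036,1239,2023,4351,-4431,4428,-4432,-4425,-4197,-4224,4421],
  [0,0,0,0,0,0,0,0,0,0,0,0,0,0,0,0,0,0,0,0,0,0,0,0,0,0,0,0,3717,473,-3460,-2549,9,-2780,1173,1617,-481,1647,-861,-120,-3717,-1983,-3717,-3374,3712,3696,2325,-3713],
  [0,0,0,0,0,0,0,0,0,0,0,0,0,0,0,0,0,0,0,0,0,0,0,0,0,0,0,0,0,4306,-2174,3202,-2715,2951,4233,-347,-3258,-1803,4192,4108,4303,-3910,4229,-4306,-341,4272,3227,-4281],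
  [0,0,0,0,0,0,0,0,0,0,0,0,0,0,0,0,0,0,0,0,0,0,0,0,0,0,0,0,0,0,8776,-483,2149,-1766,-617,2814,4171,-1664,-5752,-3504,-3471,-8753,-8136,8766,6386,-8749,-8715,8776],
  [0,0,0,0,0,0,0,0,0,0,0,0,0,0,0,0,0,0,0,0,0,0,0,0,0,0,0,0,0,0,0,6392,-685,5558,-254,-1376,-64,-6377,-2921,1744,-3842,6115,6091,1815,-6339,-6378,-6251,6391],
  [0,0,0,0,0,0,0,0,0,0,0,0,0,0,0,0,0,0,0,0,0,0,0,0,0,0,0,0,0,0,0,0,5529,-2554,1270,1757,144,-5011,4183,5192,-5528,286,800,4886,5520,-5528,-4271,-5511],
  [0,0,0,0,0,0,0,0,0,0,0,0,0,0,0,0,0,0,0,0,0,0,0,0,0,0,0,0,0,0,0,0,0,12215,4821,-2431,-6893,4807,11819,11972,11157,-10973,8526,5133,6217,-1675,-12129,-12214],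
  [0,0,0,0,0,0,0,0,0,0,0,0,0,0,0,0,0,0,0,0,0,0,0,0,0,0,0,0,0,0,0,0,0,0,12338,1619,-7336,-5382,11926,11758,11889,-226,5439,12210,-10871,-6468,8738,12335],
  [0,0,0,0,0,0,0,0,0,0,0,0,0,0,0,0,0,0,0,0,0,0,0,0,0,0,0,0,0,0,0,0,0,0,0,6680,4471,1138,2293,6579,6674,-4638,-4479,986,-6146,-6481,5413,-6678],
  [0,0,0,0,0,0,0,0,0,0,0,0,0,0,0,0,0,0,0,0,0,0,0,0,0,0,0,0,0,0,0,0,0,0,0,0,5505,5175,5505,-1775,5407,2500,-5131,-85,129,-2140,-5491,5494],
  [0,0,0,0,0,0,0,0,0,0,0,0,0,0,0,0,0,0,0,0,0,0,0,0,0,0,0,0,0,0,0,0,0,0,0,0,0,13440,11836,-6583,-13110,-8416,12508,-12705,12761,-13357,-13406,13398],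
  [0,0,0,0,0,0,0,0,0,0,0,0,0,0,0,0,0,0,0,0,0,0,0,0,0,0,0,0,0,0,0,0,0,0,0,0,0,0,16722,-6397,-896,15999,16640,16250,13462,11420,15981,-16706],
  [0,0,0,0,0,0,0,0,0,0,0,0,0,0,0,0,0,0,0,0,0,0,0,0,0,0,0,0,0,0,0,0,0,0,0,0,0,0,0,28986,26960,-28264,-7634,-22249,-11822,-21163,28440,28982],
  [0,0,0,0,0,0,0,0,0,0,0,0,0,0,0,0,0,0,0,0,0,0,0,0,0,0,0,0,0,0,0,0,0,0,0,0,0,0,0,0,29003,-18558,-12557,16450,28542,-28272,27182,-28987],
  [0,0,0,0,0,0,0,0,0,0,0,0,0,0,0,0,0,0,0,0,0,0,0,0,0,0,0,0,0,0,0,0,0,0,0,0,0,0,0,0,0,37698,-31659,-8401,-24041,-35347,5720,37682],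
  [0,0,0,0,0,0,0,0,0,0,0,0,0,0,0,0,0,0,0,0,0,0,0,0,0,0,0,0,0,0,0,0,0,0,0,0,0,0,0,0,0,0,57437,13495,31014,-12504,3241,57397],
  [0,0,0,0,0,0,0,0,0,0,0,0,0,0,0,0,0,0,0,0,0,0,0,0,0,0,0,0,0,0,0,0,0,0,0,0,0,0,0,0,0,0,0,52443,-18343,52216,-46612,52429],
  [0,0,0,0,0,0,0,0,0,0,0,0,0,0,0,0,0,0,0,0,0,0,0,0,0,0,0,0,0,0,0,0,0,0,0,0,0,0,0,0,0,0,0,0,73816,-67244,-73548,73679],
  [0,0,0,0,0,0,0,0,0,0,0,0,0,0,0,0,0,0,0,0,0,0,0,0,0,0,0,0,0,0,0,0,0,0,0,0,0,0,0,0,0,0,0,0,0,116440,-24552,116390],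
  [0,0,0,0,0,0,0,0,0,0,0,0,0,0,0,0,0,0,0,0,0,0,0,0,0,0,0,0,0,0,0,0,0,0,0,0,0,0,0,0,0,0,0,0,0,0,165394,165361],
  [0,0,0,0,0,0,0,0,0,0,0,0,0,0,0,0,0,0,0,0,0,0,0,0,0,0,0,0,0,0,0,0,0,0,0,0,0,0,0,0,0,0,0,0,0,0,0,705848]]"

lemma L_int_shape: "rows_satisfy lower_row 0 47 L_int"
  unfolding L_int_def by (simp only: rows_satisfy.simps lower_row.simps int_list_evaluation)

lemma U_int_shape: "rows_satisfy upper_row 0 47 U_int"
  unfolding U_int_def by (simp only: rows_satisfy.simps upper_row.simps int_list_evaluation)

lemma L_int_U_int_product_bound:
  "list_all (\<lambda>r. list_all (\<lambda>x. \<bar>x\<bar> \<le> 1045588) (lincomb r U_int)) L_int"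
  unfolding L_int_def U_int_def by (simp only: lincomb.simps int_list_evaluation)

lemma U_int_last_pivot: "U_int ! 47 ! 47 = 705848"
  unfolding U_int_def by (simp only: nth_Cons_0 nth_Cons_Suc int_list_evaluation)

definition L_cert :: "nat \<Rightarrow> nat \<Rightarrow> real" where
  "L_cert i j = (if i < 48 \<and> j < 48 then real_of_int (L_int ! i ! j) / 1000 else 0)"

definition U_cert :: "nat \<Rightarrow> nat \<Rightarrow> real" where
  "U_cert i j = (if i < 48 \<and> j < 48 then real_of_int (U_int ! i ! j) else 0)"

definition A_cert :: "nat \<Rightarrow> nat \<Rightarrow> real" where
  "A_cert i j = (\<Sum>l<48. L_cert i l * U_cert l j)"

lemma L_int_entries:
  assumes "i < 48" "j < 48"
  shows "(i < j \<longrightarrow> L_int ! i ! j = 0) \<and> L_int ! i ! i = 1000 \<and> \<bar>L_int ! i ! j\<bar> \<le> 1000"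
  using lower_row_nth[of i "47 - i" "L_int ! i"] rows_satisfy_nth[OF L_int_shape] assms
  by (cases "i < j"; cases "i = j") auto

lemma U_int_entries:
  assumes "i < 48" "j < 48"
  shows "(j < i \<longrightarrow> U_int ! i ! j = 0) \<and> U_int ! i ! i \<noteq> 0 \<and> \<bar>U_int ! i ! j\<bar> \<le> \<bar>U_int ! i ! i\<bar>"
  using upper_row_nth[of i "47 - i" "U_int ! i"] rows_satisfy_nth[OF U_int_shape] assms
  by auto

interpretation cert: LU_factorization 48 L_cert U_cert A_cert
  by unfold_locales (use L_int_entries U_int_entries in \<open>auto simp: L_cert_def U_cert_def A_cert_def\<close>)

lemma A_cert_in_RP: "A_cert \<in> RP 48"
  by (rule cert.in_RP) (use L_int_entries U_int_entries in
      \<open>auto simp: L_cert_def U_cert_def A_cert_def simp flip: of_int_abs\<close>)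

lemma A_cert_entry_bound:
  assumes "i < 48" "j < 48"
  shows "\<bar>A_cert i j\<bar> \<le> 1045588 / 1000"
proof -
  have "length (U_int ! m) = 48" if "m < 48" for m
    using upper_row_nth[of m "47 - m" "U_int ! m"] rows_satisfy_nth[OF U_int_shape] that by auto
  then have row_lengths: "\<forall>u \<in> set U_int. length u = 48"
    using rows_satisfy_nth[OF U_int_shape] by (auto simp: in_set_conv_nth)
  have len: "length (L_int ! i) = 48"
    using lower_row_nth[of i "47 - i" "L_int ! i"] rows_satisfy_nth[OF L_int_shape] assms by auto
  have comb: "length (lincomb (L_int ! i) U_int) = 48 \<and> (\<forall>j < 48. lincomb (L_int ! i) U_int ! j
      = (\<Sum>l < length (L_int ! i). L_int ! i ! l * U_int ! l ! j))"
    by (rule lincomb_nth) (use len row_lengths rows_satisfy_nth[OF U_int_shape] in auto)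
  then have "lincomb (L_int ! i) U_int ! j = (\<Sum>l<48. L_int ! i ! l * U_int ! l ! j)"
    using len assms by auto
  moreover have "lincomb (L_int ! i) U_int ! j \<in> set (lincomb (L_int ! i) U_int)"
    using comb assms by (intro nth_mem) simp
  moreover have "L_int ! i \<in> set L_int"
    using rows_satisfy_nth[OF L_int_shape] assms by auto
  ultimately have "\<bar>\<Sum>l<48. L_int ! i ! l * U_int ! l ! j\<bar> \<le> 1045588"
    using L_int_U_int_product_bound by (auto simp: list_all_iff)
  then have "\<bar>\<Sum>l<48. real_of_int (L_int ! i ! l * U_int ! l ! j)\<bar> \<le> 1045588"
    by (metis of_int_abs of_int_le_numeral_iff of_int_sum)
  then show ?thesis
    using assms by (simp add: A_cert_def L_cert_def U_cert_def flip: sum_divide_distrib)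
qed

theorem mainTheorem12:
  shows "growth_sup 48 (RP 48) > ereal 640.4861"
proof -
  have "\<bar>ge_stage A_cert 47 47 47\<bar> / (1045588 / 1000) \<le> growth 48 A_cert"
    by (rule growth_ge_stage_entry_over_bound[OF cert.ge_defined _ _ _ _ _ A_cert_entry_bound]) simp_all
  moreover have "ge_stage A_cert 47 47 47 = 705848"
    using cert.ge_stage_pivot[of 47] U_int_last_pivot by (simp add: U_cert_def)
  ultimately have "640.4861 < growth 48 A_cert" by simp
  then have "ereal 640.4861 < ereal (growth 48 A_cert)" by simp
  also have "\<dots> \<le> growth_sup 48 (RP 48)"
    unfolding growth_sup_def using A_cert_in_RP by (rule SUP_upper)
  finally show ?thesis .
qed

end
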